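(* For $\eta\in\mathbb{R}$, let $\mathfrak{s}_\eta=\mathfrak{r}_\eta\ltimes_{\mu_\eta}\mathbb{R}^4$, where $\mathfrak{r}_\eta=\langle e_1,e_2,e_3\rangle$ has non-zero brackets $[e_1,e_2]=e_2+\eta e_3$, $[e_1,e_3]=-\eta e_2+e_3$, $\mathbb{R}^4=\langle e_4,e_5,e_6,e_7\rangle$ is abelian, and $\mu_\eta:\mathfrak{r}_\eta\to\mathfrak{gl}(4,\mathbb{R})$ is given (in the basis $e_4,\dots,e_7$) by \[ \mu_\eta(e_1)=\begin{pmatrix}-\frac12&0&0&0\\0&-\frac12&0&0\\0&0&\frac12&\eta\\0&0&-\eta&\frac12\end{pmatrix},\ \mu_\eta(e_2)=\begin{pmatrix}0&0&0&0\\0&0&0&0\\0&-1&0&0\\-1&0&0&0\end{pmatrix},\ \mu_\eta(e_3)=\begin{pmatrix}0&0&0&0\\0&0&0&0\\-1&0&0&0\\0&1&0&0\end{pmatrix}. \] Then the 3-form $\varphi=e^{123}+e^{145}+e^{167}+e^{246}-e^{257}-e^{347}-e^{356}$ on $\mathfrak{s}_\eta$ (with $(e^i)$ dual to $(e_i)$) is exact, defines an ERP closed $\mathrm{G}_2$-structure, and has intrinsic torsion form $\tau=3e^{45}-3e^{67}$. For $\eta=0$ the Lie algebra is completely solvable, while for $\eta\neq0$ it is solvable but not completely solvable, and the Lie algebras $\mathfrak{s}_\eta$, $\eta\ge0$, are pairwise non-isomorphic.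
   Context: $\mathfrak{r}\ltimes_\mu\mathbb{R}^4$ denotes the semidirect product with bracket $[X,v]=\mu(X)v$ for $X\in\mathfrak{r}$, $v\in\mathbb{R}^4$. A $\mathrm{G}_2$-structure on a 7-dimensional Lie algebra is a 3-form $\varphi$ equal to $e^{123}+e^{145}+e^{167}+e^{246}-e^{257}-e^{347}-e^{356}$ in some basis; it determines an inner product $g_\varphi$ (making that basis orthonormal), a Hodge star $*_\varphi$ and norm $|\cdot|_\varphi$. It is closed if $d\varphi=0$ ($d$ the Chevalley–Eilenberg differential); then its intrinsic torsion form is the unique 2-form $\tau$ with $\tau\wedge*_\varphi\varphi=0$ and $d*_\varphi\varphi=\tau\wedge\varphi$. It is ERP if $d\tau=\frac16|\tau|_\varphi^2\varphi+\frac16*_\varphi(\tau\wedge\tau)$. A solvable Lie algebra is completely solvable if all $\mathrm{ad}_X$ have only real eigenvalues. *)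

theory Defs
  imports "Jordan_Normal_Form.Determinant" "Jordan_Normal_Form.Char_Poly"
begin

text \<open>A Lie algebra of dimension n is given by structure constants on the basis
  indexed 0..<n (index i corresponds to the paper's e_(i+1)):
  [e_i, e_j] = sum_k c i j k e_k.\<close>

type_synonym sconst = "nat \<Rightarrow> nat \<Rightarrow> nat \<Rightarrow> real"

definition lie_br :: "nat \<Rightarrow> sconst \<Rightarrow> real vec \<Rightarrow> real vec \<Rightarrow> real vec" where
  "lie_br n c x y = vec n (\<lambda>k. \<Sum>i<n. \<Sum>j<n. x $ i * y $ j * c i j k)"

definition ad_mat :: "nat \<Rightarrow> sconst \<Rightarrow> real vec \<Rightarrow> real mat" where
  "ad_mat n c X = mat n n (\<lambda>(k, j). \<Sum>i<n. X $ i * c i j k)"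

inductive_set lin_span :: "nat \<Rightarrow> real vec set \<Rightarrow> real vec set" for n S where
  zero: "0\<^sub>v n \<in> lin_span n S"
| gen: "x \<in> S \<Longrightarrow> x \<in> lin_span n S"
| add: "u \<in> lin_span n S \<Longrightarrow> v \<in> lin_span n S \<Longrightarrow> u + v \<in> lin_span n S"
| smult: "u \<in> lin_span n S \<Longrightarrow> a \<cdot>\<^sub>v u \<in> lin_span n S"

fun derived_series :: "nat \<Rightarrow> sconst \<Rightarrow> nat \<Rightarrow> real vec set" where
  "derived_series n c 0 = carrier_vec n"
| "derived_series n c (Suc k) =
     lin_span n {lie_br n c x y | x y. x \<in> derived_series n c k \<and> y \<in> derived_series n c k}"

definition solvable_lie :: "nat \<Rightarrow> sconst \<Rightarrow> bool" where
  "solvable_lie n c \<longleftrightarrow> (\<exists>k. derived_series n c k = {0\<^sub>v n})"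

definition completely_solvable :: "nat \<Rightarrow> sconst \<Rightarrow> bool" where
  "completely_solvable n c \<longleftrightarrow> solvable_lie n c \<and>
     (\<forall>X \<in> carrier_vec n. \<forall>z::complex.
        eigenvalue (map_mat complex_of_real (ad_mat n c X)) z \<longrightarrow> z \<in> \<real>)"

definition lie_isomorphic :: "nat \<Rightarrow> sconst \<Rightarrow> sconst \<Rightarrow> bool" where
  "lie_isomorphic n c c' \<longleftrightarrow> (\<exists>A \<in> carrier_mat n n. det A \<noteq> 0 \<and>
     (\<forall>x \<in> carrier_vec n. \<forall>y \<in> carrier_vec n.
        A *\<^sub>v lie_br n c x y = lie_br n c' (A *\<^sub>v x) (A *\<^sub>v y)))"

text \<open>Semidirect product r \<ltimes>_mu R^m: r has dimension d with structure constants cr,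
  the basis of R^m is indexed d..<d+m, and mu X is an m x m matrix acting on
  column vectors (basis indices shifted by d).  [X,v] = mu(X) v, R^m abelian.\<close>
definition semidirect :: "nat \<Rightarrow> sconst \<Rightarrow> (nat \<Rightarrow> real mat) \<Rightarrow> sconst" where
  "semidirect d cr mu i j k =
     (if i < d \<and> j < d then (if k < d then cr i j k else 0)
      else if i < d \<and> d \<le> j then (if d \<le> k then mu i $$ (k - d, j - d) else 0)
      else if d \<le> i \<and> j < d then (if d \<le> k then - (mu j $$ (k - d, i - d)) else 0)
      else 0)"

definition r_eta :: "real \<Rightarrow> sconst" where
  "r_eta \<eta> i j k =
     (if (i, j) = (0, 1) then (if k = 1 then 1 else if k = 2 then \<eta> else 0)
      else if (i, j) = (1, 0) then (if k = 1 then -1 else if k = 2 then - \<eta> else 0)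
      else if (i, j) = (0, 2) then (if k = 1 then - \<eta> else if k = 2 then 1 else 0)
      else if (i, j) = (2, 0) then (if k = 1 then \<eta> else if k = 2 then -1 else 0)
      else 0)"

definition mu_eta :: "real \<Rightarrow> nat \<Rightarrow> real mat" where
  "mu_eta \<eta> i =
     (if i = 0 then mat_of_rows_list 4
        [[-1/2, 0, 0, 0], [0, -1/2, 0, 0], [0, 0, 1/2, \<eta>], [0, 0, - \<eta>, 1/2]]
      else if i = 1 then mat_of_rows_list 4
        [[0, 0, 0, 0], [0, 0, 0, 0], [0, -1, 0, 0], [-1, 0, 0, 0]]
      else if i = 2 then mat_of_rows_list 4
        [[0, 0, 0, 0], [0, 0, 0, 0], [-1, 0, 0, 0], [0, 1, 0, 0]]
      else 0\<^sub>m 4 4)"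

definition s_eta :: "real \<Rightarrow> sconst" where
  "s_eta \<eta> = semidirect 3 (r_eta \<eta>) (mu_eta \<eta>)"

text \<open>A (possibly inhomogeneous) form is given by its coefficients in the basis
  e^I (I a finite set of indices, e^I = e^(i1) \<and> ... \<and> e^(ip) with i1 < ... < ip).\<close>

type_synonym form = "nat set \<Rightarrow> real"

definition is_form :: "nat \<Rightarrow> nat \<Rightarrow> form \<Rightarrow> bool" where
  "is_form n p \<alpha> \<longleftrightarrow> (\<forall>I. \<alpha> I \<noteq> 0 \<longrightarrow> I \<subseteq> {0..<n} \<and> card I = p)"

definition zero_form :: form where
  "zero_form = (\<lambda>I. 0)"

text \<open>Sign of the shuffle putting (sorted I, sorted J) in increasing order.\<close>
definition shuffle_sign :: "nat set \<Rightarrow> nat set \<Rightarrow> real" where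
  "shuffle_sign I J = (-1) ^ card {(i, j). i \<in> I \<and> j \<in> J \<and> j < i}"

definition wedge :: "form \<Rightarrow> form \<Rightarrow> form" where
  "wedge \<alpha> \<beta> = (\<lambda>K. \<Sum>I \<in> Pow K. shuffle_sign I (K - I) * \<alpha> I * \<beta> (K - I))"

text \<open>Value of a form on the basis vectors e_(k1),...,e_(kp).\<close>
definition inversions :: "nat list \<Rightarrow> nat" where
  "inversions ks = card {(a, b). a < b \<and> b < length ks \<and> ks ! b < ks ! a}"

definition form_eval :: "form \<Rightarrow> nat list \<Rightarrow> real" where
  "form_eval \<alpha> ks = (if distinct ks then (-1) ^ inversions ks * \<alpha> (set ks) else 0)"

text \<open>Chevalley--Eilenberg differential (trivial coefficients):
  d\<alpha>(x0,...,xp) = sum_(a<b) (-1)^(a+b) \<alpha>([xa,xb], x0,..^a..^b..,xp),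
  evaluated on increasing tuples of basis vectors.\<close>
definition CE_d :: "nat \<Rightarrow> sconst \<Rightarrow> form \<Rightarrow> form" where
  "CE_d n c \<alpha> = (\<lambda>K. if K \<subseteq> {0..<n} then
     (let ks = sorted_list_of_set K in
       \<Sum>a<length ks. \<Sum>b<length ks. if a < b then
          (-1) ^ (a + b) * (\<Sum>l<n. c (ks ! a) (ks ! b) l * form_eval \<alpha> (l # nths ks (- {a, b})))
        else 0)
     else 0)"

text \<open>Hodge star and norm for the inner product making e_0,...,e_(n-1) orthonormal
  and orientation e^(0...n-1).\<close>
definition hodge :: "nat \<Rightarrow> form \<Rightarrow> form" where
  "hodge n \<alpha> = (\<lambda>J. if J \<subseteq> {0..<n}
      then shuffle_sign ({0..<n} - J) J * \<alpha> ({0..<n} - J) else 0)"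

definition form_norm2 :: "nat \<Rightarrow> form \<Rightarrow> real" where
  "form_norm2 n \<alpha> = (\<Sum>I \<in> Pow {0..<n}. (\<alpha> I)\<^sup>2)"

text \<open>Basis form e^(k1...kp) written with the paper's 1-based indices (ks increasing).\<close>
definition eb :: "nat list \<Rightarrow> form" where
  "eb ks = (\<lambda>I. if I = (\<lambda>k. k - 1) ` set ks then 1 else 0)"

definition phi0 :: form where
  "phi0 = (\<lambda>I. eb [1,2,3] I + eb [1,4,5] I + eb [1,6,7] I + eb [2,4,6] I
              - eb [2,5,7] I - eb [3,4,7] I - eb [3,5,6] I)"

text \<open>A G2-structure: in some basis equal to the standard 3-form.  Here the form is
  considered in the given basis e_1..e_7 of the Lie algebra.\<close>
definition is_G2_in_basis :: "form \<Rightarrow> bool" where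
  "is_G2_in_basis \<phi> \<longleftrightarrow> \<phi> = phi0"

definition exact_form :: "nat \<Rightarrow> sconst \<Rightarrow> nat \<Rightarrow> form \<Rightarrow> bool" where
  "exact_form n c p \<alpha> \<longleftrightarrow> (\<exists>\<beta>. is_form n (p - 1) \<beta> \<and> CE_d n c \<beta> = \<alpha>)"

definition closed_G2 :: "sconst \<Rightarrow> form \<Rightarrow> bool" where
  "closed_G2 c \<phi> \<longleftrightarrow> is_G2_in_basis \<phi> \<and> CE_d 7 c \<phi> = zero_form"

definition torsion_form :: "sconst \<Rightarrow> form \<Rightarrow> form" where
  "torsion_form c \<phi> = (THE \<tau>. is_form 7 2 \<tau> \<and> wedge \<tau> (hodge 7 \<phi>) = zero_form
                               \<and> CE_d 7 c (hodge 7 \<phi>) = wedge \<tau> \<phi>)"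

definition ERP :: "sconst \<Rightarrow> form \<Rightarrow> bool" where
  "ERP c \<phi> \<longleftrightarrow> closed_G2 c \<phi> \<and>
     (let \<tau> = torsion_form c \<phi> in
        CE_d 7 c \<tau> = (\<lambda>I. (1/6) * form_norm2 7 \<tau> * \<phi> I + (1/6) * hodge 7 (wedge \<tau> \<tau>) I))"

definition tau0 :: form where
  "tau0 = (\<lambda>I. 3 * eb [4,5] I - 3 * eb [6,7] I)"

end

(*
  Everything about \<phi> is a finite computation in the exterior algebra of the dual of s_\<eta>:
  differentials, wedge products and Hodge stars of forms with explicit coefficients are
  evaluated on all index sets of the relevant degree.  This gives d\<phi> = 0,
  \<phi> = d(-e^23/2 + e^45 - e^67), d*\<phi> = \<tau>\<and>\<phi> with \<tau>\<and>*\<phi> = 0, and d\<tau> = 3\<phi> + *(\<tau>\<and>\<tau>)/6 with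
  |\<tau>|^2 = 18.  Wedging with \<phi> is injective on 2-forms, so \<tau> is the torsion form.

  The derived series descends through <e2,...,e7> and the abelian <e6,e7> to zero.  ad e1 has
  the eigenvalue 1 + i\<eta>, whereas for \<eta> = 0 every ad X is triangular.  A Lie algebra
  isomorphism A conjugates ad x to ad (A x), and the invariants tr (ad x) = 2 x1 and
  tr (ad x)^2 = (3 - 4\<eta>^2) x1^2 then force \<eta>^2 = \<eta>'^2.
*)

theory Submission
  imports Defs
begin

section \<open>Evaluating forms on index lists\<close>

lemma upt_zero_small_numerals:
  "[0..<1] = [0::nat]" "[0..<2] = [0::nat,1]" "[0..<3] = [0::nat,1,2]"
  "[0..<4] = [0::nat,1,2,3]" "[0..<5] = [0::nat,1,2,3,4]" "[0..<6] = [0::nat,1,2,3,4,5]"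
  "[0..<7] = [0::nat,1,2,3,4,5,6]"
  by (simp_all add: upt_rec)

lemmas s_eta_simps = s_eta_def semidirect_def mu_eta_def mat_of_rows_list_def r_eta_def

lemma inversions_eq_length_filter:
  "inversions ks = length (filter (\<lambda>(a, b). ks ! b < ks ! a)
     (concat (map (\<lambda>b. map (\<lambda>a. (a, b)) [0..<b]) [0..<length ks])))"
proof -
  let ?L = "filter (\<lambda>(a, b). ks ! b < ks ! a) (concat (map (\<lambda>b. map (\<lambda>a. (a, b)) [0..<b]) [0..<length ks]))"
  have set_L: "set ?L = {(a, b). a < b \<and> b < length ks \<and> ks ! b < ks ! a}"
    by (auto simp: image_iff)
  have "inj_on (\<lambda>b. map (\<lambda>a. (a, b)) [0..<b]) X" for X
    by (rule inj_onI) (metis length_map length_upt minus_nat.diff_0)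
  then have "distinct ?L"
    by (auto intro!: distinct_filter distinct_concat simp: distinct_map) (auto simp: inj_on_def)
  then show ?thesis
    unfolding inversions_def set_L[symmetric] by (rule distinct_card)
qed

lemma set_eq_iff_sort_remdups: "set xs = set ys \<longleftrightarrow> sort (remdups xs) = sort (remdups ys)"
  by (metis sorted_list_of_set_sort_remdups set_remdups set_sort)

lemma eb_set:
  "eb L (set ys) = (if sort (remdups ys) = sort (remdups (map (\<lambda>k. k - 1) L)) then 1 else 0)"
  unfolding eb_def by (simp only: set_map[symmetric] set_eq_iff_sort_remdups)

lemma in_set_Cons_iff: "x \<in> set (y # ys) \<longleftrightarrow> x = y \<or> x \<in> set ys"
  by simp

lemma not_in_set_Nil: "x \<notin> set []"
  by simp

lemma set_Nil_subset: "set [] \<subseteq> A"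
  by simp

lemma set_Cons_subset_iff: "set (y # ys) \<subseteq> A \<longleftrightarrow> y \<in> A \<and> set ys \<subseteq> A"
  by simp

lemma set_subset_atLeastLessThan_iff: "set (ks :: nat list) \<subseteq> {0..<n} \<longleftrightarrow> list_all (\<lambda>x. x < n) ks"
  by (auto simp: list_all_iff)

lemma set_minus_eq_set_filter: "set ks - A = set (filter (\<lambda>x. x \<notin> A) ks)"
  by auto

lemma sum_Pow_set_conv_sum_list:
  assumes "distinct ks"
  shows "sum f (Pow (set ks)) = sum_list (map (\<lambda>js. f (set js)) (subseqs ks))"
proof -
  have "sum f (Pow (set ks)) = sum f (set (map set (subseqs ks)))"
    by (simp add: subseqs_powset)
  also have "\<dots> = sum_list (map f (map set (subseqs ks)))"
    by (rule sum.distinct_set_conv_list[OF distinct_set_subseqs[OF assms]])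
  finally show ?thesis by (simp add: o_def)
qed

lemma shuffle_sign_set:
  assumes "distinct xs" "distinct ys"
  shows "shuffle_sign (set xs) (set ys) = (-1) ^ length (filter (\<lambda>(i, j). j < i) (List.product xs ys))"
proof -
  have "set (filter (\<lambda>(i, j). j < i) (List.product xs ys)) = {(i, j). i \<in> set xs \<and> j \<in> set ys \<and> j < i}"
    by auto
  moreover have "distinct (filter (\<lambda>(i, j). j < i) (List.product xs ys))"
    using assms by (simp add: distinct_product)
  ultimately show ?thesis
    unfolding shuffle_sign_def by (metis distinct_card)
qed

text \<open>In the following expansions a guard \<open>if a = 0 then 0 else \<dots>\<close> makes the simplifier decide
  whether a coefficient vanishes before it evaluates the remaining factors; this keeps the
  evaluations below tractable.\<close>

lemma if_eq_0_then_0: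
  "(if a = 0 then 0 else a * b) = (a * b :: real)"
  "(if a = 0 then 0 else s * a * b) = (s * a * b :: real)"
  "(if b = 0 then 0 else s * a * b) = (s * a * b :: real)"
  by simp_all

lemma CE_d_set:
  "CE_d n c \<alpha> (set ks) = (if set ks \<subseteq> {0..<n} then
     (let ks = sort (remdups ks) in
       \<Sum>a\<leftarrow>[0..<length ks]. \<Sum>b\<leftarrow>[0..<length ks]. if a < b then
          (-1) ^ (a + b) * (\<Sum>l\<leftarrow>[0..<n]. if c (ks ! a) (ks ! b) l = 0 then 0 else
              c (ks ! a) (ks ! b) l * form_eval \<alpha> (l # nths ks (- {a, b})))
        else 0)
     else 0)"
  unfolding if_eq_0_then_0 CE_d_def sorted_list_of_set_sort_remdups atLeast_upt
    sum_set_upt_conv_sum_list_nat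
  by simp

lemma wedge_set:
  assumes "distinct ks"
  shows "wedge \<alpha> \<beta> (set ks) =
    (\<Sum>js\<leftarrow>subseqs ks. if \<alpha> (set js) = 0 then 0 else
       shuffle_sign (set js) (set (filter (\<lambda>x. x \<notin> set js) ks))
       * \<alpha> (set js) * \<beta> (set (filter (\<lambda>x. x \<notin> set js) ks)))"
  unfolding if_eq_0_then_0 wedge_def sum_Pow_set_conv_sum_list[OF assms] set_minus_eq_set_filter ..

lemma wedge_set_guard_right:
  assumes "distinct ks"
  shows "wedge \<alpha> \<beta> (set ks) =
    (\<Sum>js\<leftarrow>subseqs ks. if \<beta> (set (filter (\<lambda>x. x \<notin> set js) ks)) = 0 then 0 else
       shuffle_sign (set js) (set (filter (\<lambda>x. x \<notin> set js) ks))
       * \<alpha> (set js) * \<beta> (set (filter (\<lambda>x. x \<notin> set js) ks)))"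
  unfolding if_eq_0_then_0 wedge_def sum_Pow_set_conv_sum_list[OF assms] set_minus_eq_set_filter ..

lemma hodge_set:
  "hodge n \<alpha> (set ks) = (if set ks \<subseteq> {0..<n} then
     (if \<alpha> (set (filter (\<lambda>x. x \<notin> set ks) [0..<n])) = 0 then 0 else
      shuffle_sign (set (filter (\<lambda>x. x \<notin> set ks) [0..<n])) (set ks)
      * \<alpha> (set (filter (\<lambda>x. x \<notin> set ks) [0..<n])))
   else 0)"
proof -
  have "{0..<n} - set ks = set (filter (\<lambda>x. x \<notin> set ks) [0..<n])"
    by auto
  then show ?thesis
    unfolding hodge_def by simp
qed

lemma form_eq_by_enumeration:
  assumes "is_form n p \<alpha>" "is_form n p \<beta>"
    and "list_all (\<lambda>ks. \<alpha> (set ks) = \<beta> (set ks)) (filter (\<lambda>ks. length ks = p) (subseqs [0..<n]))"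
  shows "\<alpha> = \<beta>"
proof
  fix K
  show "\<alpha> K = \<beta> K"
  proof (cases "K \<subseteq> {0..<n} \<and> card K = p")
    case True
    then obtain ks where ks: "ks \<in> set (subseqs [0..<n])" "K = set ks"
      using subset_subseqs[of K "[0..<n]"] by auto
    moreover have "length ks = p"
      using True ks subseqs_distinctD[OF ks(1)] by (metis distinct_card distinct_upt)
    ultimately show ?thesis
      using assms(3) by (auto simp: list_all_iff)
  next
    case False
    then show ?thesis
      using assms(1,2) unfolding is_form_def by metis
  qed
qed

section \<open>Degrees of forms\<close>

lemma is_form_zero_form: "is_form n p zero_form"
  by (simp add: is_form_def zero_form_def)

lemma length_nths_Compl_pair: "a < b \<Longrightarrow> b < length ks \<Longrightarrow> length (nths ks (- {a, b})) = length ks - 2"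
proof -
  assume ab: "a < b" "b < length ks"
  have "{i. i < length ks \<and> i \<in> - {a, b}} = {0..<length ks} - {a, b}" by auto
  hence "card {i. i < length ks \<and> i \<in> - {a, b}} = length ks - 2" using ab by simp
  thus ?thesis by (simp add: length_nths)
qed

lemma is_form_CE_d: "is_form n p \<alpha> \<Longrightarrow> is_form n (Suc p) (CE_d n c \<alpha>)"
proof (unfold is_form_def, intro allI impI)
  fix K assume f: "\<forall>I. \<alpha> I \<noteq> 0 \<longrightarrow> I \<subseteq> {0..<n} \<and> card I = p" and nz: "CE_d n c \<alpha> K \<noteq> 0"
  hence Ksub: "K \<subseteq> {0..<n}" unfolding CE_d_def by (auto split: if_splits)
  hence fin: "finite K" by (rule finite_subset) simp
  let ?ks = "sorted_list_of_set K"
  from nz Ksub obtain a b l where ab: "a < b" "b < length ?ks"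
     and fe: "form_eval \<alpha> (l # nths ?ks (- {a, b})) \<noteq> 0"
    unfolding CE_d_def Let_def
    by (smt (verit, ccfv_threshold) lessThan_iff mult_eq_0_iff sum.neutral)
  from fe have "distinct (l # nths ?ks (- {a, b}))" "\<alpha> (set (l # nths ?ks (- {a, b}))) \<noteq> 0"
    unfolding form_eval_def by (auto split: if_splits)
  hence "length (l # nths ?ks (- {a, b})) = p" using f by (metis distinct_card)
  hence "length ?ks = Suc p" using length_nths_Compl_pair[OF ab] ab by simp
  thus "K \<subseteq> {0..<n} \<and> card K = Suc p" using Ksub fin by simp
qed

lemma is_form_wedge: "is_form n p \<alpha> \<Longrightarrow> is_form n q \<beta> \<Longrightarrow> is_form n (p + q) (wedge \<alpha> \<beta>)"
proof (unfold is_form_def, intro allI impI)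
  fix K assume f: "\<forall>I. \<alpha> I \<noteq> 0 \<longrightarrow> I \<subseteq> {0..<n} \<and> card I = p"
     and g: "\<forall>I. \<beta> I \<noteq> 0 \<longrightarrow> I \<subseteq> {0..<n} \<and> card I = q" and nz: "wedge \<alpha> \<beta> K \<noteq> 0"
  from nz obtain I where I0: "I \<in> Pow K" "shuffle_sign I (K - I) * \<alpha> I * \<beta> (K - I) \<noteq> 0"
    unfolding wedge_def using sum.not_neutral_contains_not_neutral by blast
  hence I: "I \<in> Pow K" "\<alpha> I \<noteq> 0" "\<beta> (K - I) \<noteq> 0" by auto
  have sub: "I \<subseteq> {0..<n}" "K - I \<subseteq> {0..<n}" and c: "card I = p" "card (K - I) = q" using f g I by auto
  have fin: "finite I" "finite (K - I)" using sub by (meson finite_atLeastLessThan finite_subset)+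
  have KU: "K = I \<union> (K - I)" using I by auto
  have "card (I \<union> (K - I)) = card I + card (K - I)"
    by (rule card_Un_disjoint[OF fin]) auto
  hence "card K = p + q" using KU c by simp
  moreover have "K \<subseteq> {0..<n}" using sub KU by blast
  ultimately show "K \<subseteq> {0..<n} \<and> card K = p + q" by simp
qed

lemma is_form_hodge: "is_form n p \<alpha> \<Longrightarrow> p \<le> n \<Longrightarrow> is_form n (n - p) (hodge n \<alpha>)"
proof (unfold is_form_def, intro allI impI)
  fix J assume f: "\<forall>I. \<alpha> I \<noteq> 0 \<longrightarrow> I \<subseteq> {0..<n} \<and> card I = p" and nz: "hodge n \<alpha> J \<noteq> 0"
  hence J: "J \<subseteq> {0..<n}" "\<alpha> ({0..<n} - J) \<noteq> 0" unfolding hodge_def by (auto split: if_splits)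
  hence "card ({0..<n} - J) = p" using f by auto
  moreover have "card ({0..<n} - J) = n - card J" using J by (simp add: card_Diff_subset finite_subset)
  moreover have "card J \<le> card {0..<n}" using J(1) by (intro card_mono) auto
  ultimately show "J \<subseteq> {0..<n} \<and> card J = n - p" using J by simp
qed

lemma is_form_eb: "(\<lambda>k. k - 1) ` set L \<subseteq> {0..<n} \<Longrightarrow> card ((\<lambda>k. k - 1) ` set L) = p \<Longrightarrow> is_form n p (eb L)"
  unfolding is_form_def eb_def by auto

lemma is_form_add: "is_form n p \<alpha> \<Longrightarrow> is_form n p \<beta> \<Longrightarrow> is_form n p (\<lambda>I. \<alpha> I + \<beta> I)"
  unfolding is_form_def by (metis add.right_neutral)

lemma is_form_diff: "is_form n p \<alpha> \<Longrightarrow> is_form n p \<beta> \<Longrightarrow> is_form n p (\<lambda>I. \<alpha> I - \<beta> I)"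
  unfolding is_form_def by (metis diff_zero diff_self)

lemma is_form_smult: "is_form n p \<alpha> \<Longrightarrow> is_form n p (\<lambda>I. a * \<alpha> I)"
  unfolding is_form_def by auto

section \<open>The 3-form \<open>phi0\<close> and its torsion\<close>

definition phi0_primitive :: form where
  "phi0_primitive = (\<lambda>I. (-1/2) * eb [2,3] I + eb [4,5] I - eb [6,7] I)"

lemma is_form_phi0: "is_form 7 3 phi0"
  unfolding phi0_def by (intro is_form_add is_form_diff is_form_eb) auto

lemma is_form_tau0: "is_form 7 2 tau0"
  unfolding tau0_def by (intro is_form_add is_form_diff is_form_eb is_form_smult) auto

lemma is_form_phi0_primitive: "is_form 7 2 phi0_primitive"
  unfolding phi0_primitive_def by (intro is_form_add is_form_diff is_form_eb is_form_smult) auto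

lemma is_form_hodge_phi0: "is_form 7 4 (hodge 7 phi0)"
  using is_form_hodge[OF is_form_phi0] by simp

text \<open>Coefficient tables, keyed by the sorted 0-based index lists.\<close>

definition coeff_table :: "(nat list \<times> real) list \<Rightarrow> nat list \<Rightarrow> real" where
  "coeff_table T ks = (case map_of T ks of Some r \<Rightarrow> r | None \<Rightarrow> 0)"

lemma phi0_set: "phi0 (set ks) = coeff_table [([0,1,2], 1), ([0,3,4], 1), ([0,5,6], 1), ([1,3,5], 1),
   ([1,4,6], -1), ([2,3,6], -1), ([2,4,5], -1)] (sort (remdups ks))"
  unfolding phi0_def eb_set coeff_table_def by (auto split: if_split)

lemma tau0_set: "tau0 (set ks) = coeff_table [([3,4], 3), ([5,6], -3)] (sort (remdups ks))"
  unfolding tau0_def eb_set coeff_table_def by (auto split: if_split)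

lemma phi0_primitive_set:
  "phi0_primitive (set ks) = coeff_table [([1,2], -1/2), ([3,4], 1), ([5,6], -1)] (sort (remdups ks))"
  unfolding phi0_primitive_def eb_set coeff_table_def by (auto split: if_split)

text \<open>The evaluations are run with \<open>list.set\<close> deleted, so that index sets keep the shape
  \<open>set ks\<close> matched by these rules.\<close>

lemmas form_evaluation_simps =
  CE_d_set wedge_set hodge_set form_eval_def inversions_eq_length_filter shuffle_sign_set nths_def
  eb_set phi0_set tau0_set phi0_primitive_set coeff_table_def
  in_set_Cons_iff not_in_set_Nil set_Cons_subset_iff set_Nil_subset set_subset_atLeastLessThan_iff
  Let_def upt_zero_small_numerals s_eta_simps

lemma CE_d_phi0: "CE_d 7 (s_eta \<eta>) phi0 = zero_form"
  by (rule form_eq_by_enumeration[OF is_form_CE_d[OF is_form_phi0] is_form_zero_form])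
    (simp add: form_evaluation_simps zero_form_def del: list.set)

lemma CE_d_phi0_primitive: "CE_d 7 (s_eta \<eta>) phi0_primitive = phi0"
  by (rule form_eq_by_enumeration[OF is_form_CE_d[OF is_form_phi0_primitive, simplified] is_form_phi0])
    (simp add: form_evaluation_simps del: list.set)

lemma CE_d_hodge_phi0: "CE_d 7 (s_eta \<eta>) (hodge 7 phi0) = wedge tau0 phi0"
  by (rule form_eq_by_enumeration[OF is_form_CE_d[OF is_form_hodge_phi0, simplified]
        is_form_wedge[OF is_form_tau0 is_form_phi0, simplified]])
    (simp add: form_evaluation_simps del: list.set)

lemma wedge_tau0_hodge_phi0: "wedge tau0 (hodge 7 phi0) = zero_form"
  by (rule form_eq_by_enumeration[OF is_form_wedge[OF is_form_tau0 is_form_hodge_phi0, simplified]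
        is_form_zero_form])
    (simp add: form_evaluation_simps zero_form_def del: list.set)

lemma form_norm2_tau0: "form_norm2 7 tau0 = 18"
  unfolding form_norm2_def atLeastLessThan_upt sum_Pow_set_conv_sum_list[OF distinct_upt]
  by (simp add: form_evaluation_simps del: list.set)

lemma CE_d_tau0:
  "CE_d 7 (s_eta \<eta>) tau0 = (\<lambda>I. 3 * phi0 I + (1/6) * hodge 7 (wedge tau0 tau0) I)"
  by (rule form_eq_by_enumeration[OF is_form_CE_d[OF is_form_tau0, simplified]
        is_form_add[OF is_form_smult[OF is_form_phi0]
          is_form_smult[OF is_form_hodge[OF is_form_wedge[OF is_form_tau0 is_form_tau0], simplified]]]])
    (simp add: form_evaluation_simps del: list.set)

lemma wedge_phi0_inj:
  assumes "is_form 7 2 \<sigma>" "is_form 7 2 \<tau>" and "wedge \<sigma> phi0 = wedge \<tau> phi0"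
  shows "\<sigma> = \<tau>"
proof (rule form_eq_by_enumeration[OF assms(1,2)])
  have vanish: "\<sigma> (set js) = 0" "\<tau> (set js) = 0" if "length (remdups js) \<noteq> 2" for js
    using assms(1,2) that unfolding is_form_def by (metis card_set)+
  txt \<open>Each coefficient of \<open>\<sigma> \<and> \<phi>\<close> is a signed sum of coefficients of \<open>\<sigma>\<close>; the resulting
    linear system determines the 21 coefficients of a 2-form.\<close>
  have "list_all (\<lambda>ks. wedge \<sigma> phi0 (set ks) = wedge \<tau> phi0 (set ks))
      (filter (\<lambda>ks. length ks = 5) (subseqs [0..<7]))"
    unfolding assms(3) by (simp add: list_all_iff)
  then show "list_all (\<lambda>ks. \<sigma> (set ks) = \<tau> (set ks)) (filter (\<lambda>ks. length ks = 2) (subseqs [0..<7]))"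
    by (simp (no_asm_use) add: form_evaluation_simps wedge_set_guard_right vanish del: list.set wedge_set)
      (elim conjE, (intro conjI; linarith))
qed

section \<open>Brackets and adjoint matrices\<close>

lemmas sum_lessThan_conv_sum_list =
  atLeast_upt atLeastLessThan_upt sum_set_upt_conv_sum_list_nat upt_zero_small_numerals

lemma lie_br_nth: "k < n \<Longrightarrow> lie_br n c x y $ k = (\<Sum>i<n. \<Sum>j<n. x $ i * y $ j * c i j k)"
  by (simp add: lie_br_def)

lemma lie_br_carrier [simp]: "lie_br n c x y \<in> carrier_vec n"
  by (simp add: lie_br_def)

lemma ad_mat_carrier [simp]: "ad_mat n c x \<in> carrier_mat n n"
  by (simp add: ad_mat_def)

lemma lie_br_eq_ad_mat_mult_vec: "y \<in> carrier_vec n \<Longrightarrow> lie_br n c x y = ad_mat n c x *\<^sub>v y"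
proof (rule eq_vecI)
  assume y: "y \<in> carrier_vec n"
  fix k assume "k < dim_vec (ad_mat n c x *\<^sub>v y)"
  then have k: "k < n" by (simp add: ad_mat_def)
  have "(ad_mat n c x *\<^sub>v y) $ k = (\<Sum>j<n. (\<Sum>i<n. x $ i * c i j k) * y $ j)"
    using k y by (simp add: ad_mat_def scalar_prod_def lessThan_atLeast0)
  also have "\<dots> = (\<Sum>i<n. \<Sum>j<n. x $ i * y $ j * c i j k)"
    by (subst sum.swap) (simp add: sum_distrib_left sum_distrib_right mult_ac)
  finally show "lie_br n c x y $ k = (ad_mat n c x *\<^sub>v y) $ k"
    using k by (simp add: lie_br_def)
qed (simp add: lie_br_def ad_mat_def)

lemma of_real_ad_mat_mult_vec_nth:
  assumes "k < n" and "v \<in> carrier_vec n"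
  shows "(map_mat complex_of_real (ad_mat n c x) *\<^sub>v v) $ k =
    (\<Sum>j<n. complex_of_real (\<Sum>i<n. x $ i * c i j k) * v $ j)"
  using assms by (simp add: ad_mat_def scalar_prod_def atLeast0LessThan del: of_real_sum)

section \<open>Solvability\<close>

lemma lin_span_minimal:
  assumes "S \<subseteq> W" "0\<^sub>v n \<in> W" "\<And>u v. u \<in> W \<Longrightarrow> v \<in> W \<Longrightarrow> u + v \<in> W"
    "\<And>a u. u \<in> W \<Longrightarrow> a \<cdot>\<^sub>v u \<in> W"
  shows "lin_span n S \<subseteq> W"
proof
  fix x assume "x \<in> lin_span n S"
  then show "x \<in> W" by induction (use assms in auto)
qed

definition vanishing_coords :: "nat \<Rightarrow> nat set \<Rightarrow> real vec set" where
  "vanishing_coords n I = {v \<in> carrier_vec n. \<forall>i \<in> I. v $ i = 0}"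

lemma lin_span_vanishing_coords:
  "I \<subseteq> {..<n} \<Longrightarrow> S \<subseteq> vanishing_coords n I \<Longrightarrow> lin_span n S \<subseteq> vanishing_coords n I"
  by (rule lin_span_minimal) (auto simp: vanishing_coords_def)

lemma derived_series_Suc_subset:
  assumes "I \<subseteq> {..<n}" and "derived_series n c k \<subseteq> W"
    and "\<And>x y. x \<in> W \<Longrightarrow> y \<in> W \<Longrightarrow> lie_br n c x y \<in> vanishing_coords n I"
  shows "derived_series n c (Suc k) \<subseteq> vanishing_coords n I"
  using assms(2,3) by (auto intro!: lin_span_vanishing_coords[OF assms(1)])

lemma vanishing_coords_all: "vanishing_coords n {..<n} = {0\<^sub>v n}"
  by (auto simp: vanishing_coords_def)

lemma s_eta_bracket_coord_0: "lie_br 7 (s_eta \<eta>) x y $ 0 = 0"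
  by (simp add: lie_br_nth sum_lessThan_conv_sum_list s_eta_simps)

lemma s_eta_bracket_coords_lt5:
  assumes "x $ 0 = 0" "y $ 0 = 0" "k < 5"
  shows "lie_br 7 (s_eta \<eta>) x y $ k = 0"
  using assms(3)
  by (auto simp: less_Suc_eq numeral_eq_Suc lie_br_nth sum_lessThan_conv_sum_list s_eta_simps assms(1,2))

lemma s_eta_bracket_vanishes:
  assumes "\<forall>i<5. x $ i = 0" "\<forall>i<5. y $ i = 0" "k < 7"
  shows "lie_br 7 (s_eta \<eta>) x y $ k = 0"
  using assms(3)
  by (auto simp: less_Suc_eq numeral_eq_Suc lie_br_nth sum_lessThan_conv_sum_list s_eta_simps assms(1,2))

lemma derived_series_s_eta_1: "derived_series 7 (s_eta \<eta>) 1 \<subseteq> vanishing_coords 7 {0}"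
  using derived_series_Suc_subset[of "{0}" 7 "s_eta \<eta>" 0 "carrier_vec 7"]
  by (simp add: vanishing_coords_def s_eta_bracket_coord_0)

lemma derived_series_s_eta_2: "derived_series 7 (s_eta \<eta>) 2 \<subseteq> vanishing_coords 7 {..<5}"
  using derived_series_Suc_subset[OF _ derived_series_s_eta_1, of "{..<5}"]
  by (simp add: numeral_2_eq_2 vanishing_coords_def s_eta_bracket_coords_lt5)

lemma solvable_s_eta: "solvable_lie 7 (s_eta \<eta>)"
proof -
  have "derived_series 7 (s_eta \<eta>) 3 \<subseteq> vanishing_coords 7 {..<7}"
    using derived_series_Suc_subset[OF _ derived_series_s_eta_2, of "{..<7}"]
    by (simp add: numeral_3_eq_3 vanishing_coords_def s_eta_bracket_vanishes)
  moreover have "0\<^sub>v 7 \<in> derived_series 7 (s_eta \<eta>) 3"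
    by (simp add: numeral_3_eq_3 lin_span.zero)
  ultimately show ?thesis
    unfolding solvable_lie_def vanishing_coords_all by blast
qed

section \<open>Complete solvability\<close>

lemma eigenvalue_transpose_mat:
  "A \<in> carrier_mat n n \<Longrightarrow> eigenvalue (transpose_mat A) z \<longleftrightarrow> eigenvalue (A :: 'a :: field mat) z"
  by (simp add: eigenvalue_root_char_poly[of _ n])

lemma eigenvalue_upper_triangular:
  assumes A: "(A :: 'a :: field mat) \<in> carrier_mat n n" and "upper_triangular A" and "eigenvalue A z"
  shows "z \<in> set (diag_mat A)"
proof -
  have "poly (\<Prod>a\<leftarrow>diag_mat A. [:- a, 1:]) z = 0"
    using assms by (simp add: eigenvalue_root_char_poly[OF A] char_poly_upper_triangular[OF A])
  then show ?thesis by (auto simp: poly_prod_list_zero_iff)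
qed

lemma eigenvalue_of_real_lower_triangular:
  assumes "A \<in> carrier_mat n n" and "upper_triangular (transpose_mat A)"
    and "eigenvalue (map_mat complex_of_real A) z"
  shows "z \<in> \<real>"
proof -
  have "z \<in> set (diag_mat (transpose_mat (map_mat complex_of_real A)))"
    using assms
    by (intro eigenvalue_upper_triangular[of _ n]) (auto simp: eigenvalue_transpose_mat upper_triangular_def)
  then show ?thesis using assms(1) by (auto simp: diag_mat_def)
qed

lemma all_less_conv_list_all: "(\<forall>i<n. P i) \<longleftrightarrow> list_all P [0..<n]"
  by (auto simp: list_all_iff)

lemma ad_mat_s_eta_0_lower_triangular: "upper_triangular (transpose_mat (ad_mat 7 (s_eta 0) x))"
  by (simp add: upper_triangular_def ad_mat_def all_less_conv_list_all sum_lessThan_conv_sum_list s_eta_simps)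

lemma less_7_cases: "(k::nat) < 7 \<Longrightarrow> k = 0 \<or> k = 1 \<or> k = 2 \<or> k = 3 \<or> k = 4 \<or> k = 5 \<or> k = 6"
  by arith

lemma eigenvalue_ad_e1_s_eta:
  "eigenvalue (map_mat complex_of_real (ad_mat 7 (s_eta \<eta>) (unit_vec 7 0))) (Complex 1 \<eta>)"
proof -
  let ?v = "vec 7 (\<lambda>k. if k = 1 then 1 else if k = 2 then - \<i> else 0) :: complex vec"
  have "map_mat complex_of_real (ad_mat 7 (s_eta \<eta>) (unit_vec 7 0)) *\<^sub>v ?v = Complex 1 \<eta> \<cdot>\<^sub>v ?v"
  proof (rule eq_vecI)
    fix k assume "k < dim_vec (Complex 1 \<eta> \<cdot>\<^sub>v ?v)"
    then have k: "k < 7" by simp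
    show "(map_mat complex_of_real (ad_mat 7 (s_eta \<eta>) (unit_vec 7 0)) *\<^sub>v ?v) $ k = (Complex 1 \<eta> \<cdot>\<^sub>v ?v) $ k"
      unfolding of_real_ad_mat_mult_vec_nth[OF k vec_carrier] using less_7_cases[OF k] k
      by (auto simp: sum_lessThan_conv_sum_list s_eta_simps complex_eq_iff)
  qed (simp add: ad_mat_def)
  moreover have "?v \<noteq> 0\<^sub>v 7"
  proof
    assume "?v = 0\<^sub>v 7"
    then have "?v $ 1 = 0\<^sub>v 7 $ 1" by simp
    then show False by simp
  qed
  moreover have "dim_row (map_mat complex_of_real (ad_mat 7 (s_eta \<eta>) (unit_vec 7 0))) = 7"
    by (simp add: ad_mat_def)
  ultimately have "eigenvector (map_mat complex_of_real (ad_mat 7 (s_eta \<eta>) (unit_vec 7 0))) ?v (Complex 1 \<eta>)"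
    unfolding eigenvector_def by simp
  then show ?thesis
    unfolding eigenvalue_def by blast
qed

lemma completely_solvable_s_eta_iff: "completely_solvable 7 (s_eta \<eta>) \<longleftrightarrow> \<eta> = 0"
proof
  assume "completely_solvable 7 (s_eta \<eta>)"
  then have "Complex 1 \<eta> \<in> \<real>"
    using eigenvalue_ad_e1_s_eta unfolding completely_solvable_def by (meson unit_vec_carrier)
  then show "\<eta> = 0" by (simp add: complex_is_Real_iff)
next
  assume "\<eta> = 0"
  then show "completely_solvable 7 (s_eta \<eta>)"
    using solvable_s_eta eigenvalue_of_real_lower_triangular[OF ad_mat_carrier ad_mat_s_eta_0_lower_triangular]
    unfolding completely_solvable_def by blast
qed

section \<open>Trace invariants and non-isomorphism\<close>

lemma col_eq_mult_unit_vec: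
  fixes B :: "'a :: semiring_1 mat"
  assumes "B \<in> carrier_mat n m" "j < m"
  shows "col B j = B *\<^sub>v unit_vec m j"
proof -
  have "col B j = col (B * 1\<^sub>m m) j" by (simp add: right_mult_one_mat[OF assms(1)])
  also have "\<dots> = B *\<^sub>v unit_vec m j" using assms by (subst col_mult2) auto
  finally show ?thesis .
qed

lemma ad_mat_intertwine:
  assumes A: "A \<in> carrier_mat n n" and x: "x \<in> carrier_vec n"
    and hom: "\<forall>x \<in> carrier_vec n. \<forall>y \<in> carrier_vec n.
        A *\<^sub>v lie_br n c x y = lie_br n c' (A *\<^sub>v x) (A *\<^sub>v y)"
  shows "ad_mat n c' (A *\<^sub>v x) * A = A * ad_mat n c x"
proof (rule mat_col_eqI)
  fix j assume "j < dim_col (A * ad_mat n c x)"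
  then have j: "j < n" by (simp add: ad_mat_def)
  have e: "unit_vec n j \<in> carrier_vec n" by simp
  have "col (ad_mat n c' (A *\<^sub>v x) * A) j = ad_mat n c' (A *\<^sub>v x) *\<^sub>v (A *\<^sub>v unit_vec n j)"
    using A j by (subst col_mult2[of _ n n]) (auto simp: col_eq_mult_unit_vec)
  also have "\<dots> = A *\<^sub>v lie_br n c x (unit_vec n j)"
    using A hom x e by (simp add: lie_br_eq_ad_mat_mult_vec)
  also have "\<dots> = col (A * ad_mat n c x) j"
    using A j by (subst col_mult2[of _ n n])
      (auto simp: lie_br_eq_ad_mat_mult_vec col_eq_mult_unit_vec[OF ad_mat_carrier j])
  finally show "col (ad_mat n c' (A *\<^sub>v x) * A) j = col (A * ad_mat n c x) j" .
qed (use A in \<open>auto simp: ad_mat_def\<close>)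

lemma lie_isomorphism_ad_mat_similar:
  assumes A: "A \<in> carrier_mat n n" and "det A \<noteq> 0" and x: "x \<in> carrier_vec n"
    and hom: "\<forall>x \<in> carrier_vec n. \<forall>y \<in> carrier_vec n.
        A *\<^sub>v lie_br n c x y = lie_br n c' (A *\<^sub>v x) (A *\<^sub>v y)"
  shows "similar_mat (ad_mat n c' (A *\<^sub>v x)) (ad_mat n c x)"
proof -
  have "A \<in> Units (ring_mat TYPE(real) n ())"
    by (rule det_non_zero_imp_unit[OF A \<open>det A \<noteq> 0\<close>])
  then obtain B where B: "B \<in> carrier_mat n n" "B * A = 1\<^sub>m n" "A * B = 1\<^sub>m n"
    unfolding Units_def by (auto simp: ring_mat_simps)
  have "ad_mat n c' (A *\<^sub>v x) = ad_mat n c' (A *\<^sub>v x) * A * B"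
    using A B by (simp add: assoc_mult_mat[of _ n n _ n _ n] right_mult_one_mat[OF ad_mat_carrier])
  also have "\<dots> = A * ad_mat n c x * B"
    using ad_mat_intertwine[OF A x hom] by simp
  finally show ?thesis
    using A B by (intro similar_matI[where n = n and P = A and Q = B]) auto
qed

definition mat_trace :: "'a :: comm_ring_1 mat \<Rightarrow> 'a" where
  "mat_trace M = (\<Sum>i<dim_row M. M $$ (i, i))"

lemma mat_trace_mult_comm:
  assumes "A \<in> carrier_mat n m" "B \<in> carrier_mat m n"
  shows "mat_trace (A * B) = mat_trace (B * A)"
proof -
  have "mat_trace (A * B) = (\<Sum>i<n. \<Sum>k<m. A $$ (i, k) * B $$ (k, i))"
    using assms by (simp add: mat_trace_def scalar_prod_def lessThan_atLeast0)
  also have "\<dots> = (\<Sum>k<m. \<Sum>i<n. B $$ (k, i) * A $$ (i, k))"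
    by (subst sum.swap) (simp add: mult.commute)
  also have "\<dots> = mat_trace (B * A)"
    using assms by (simp add: mat_trace_def scalar_prod_def lessThan_atLeast0)
  finally show ?thesis .
qed

lemma similar_mat_wit_trace:
  assumes "similar_mat_wit M N P Q"
  shows "mat_trace M = mat_trace N"
proof -
  obtain n where n: "M \<in> carrier_mat n n" "N \<in> carrier_mat n n" "P \<in> carrier_mat n n"
      "Q \<in> carrier_mat n n" "Q * P = 1\<^sub>m n" "M = P * N * Q"
    using similar_mat_witD[OF refl assms] by blast
  have "mat_trace M = mat_trace (P * (N * Q))"
    using n by (simp add: assoc_mult_mat)
  also have "\<dots> = mat_trace (N * Q * P)"
    using n by (simp add: mat_trace_mult_comm[of P n n "N * Q"] assoc_mult_mat[of N n n Q n P n])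
  also have "\<dots> = mat_trace N"
    using n by (simp add: assoc_mult_mat[of N n n Q n P n])
  finally show ?thesis .
qed

lemma similar_mat_trace_pow:
  "similar_mat M N \<Longrightarrow> mat_trace (M ^\<^sub>m k) = mat_trace (N ^\<^sub>m k)"
  unfolding similar_mat_def using similar_mat_wit_pow similar_mat_wit_trace by blast

lemma mat_trace_ad_mat_s_eta: "mat_trace (ad_mat 7 (s_eta \<eta>) w) = 2 * w $ 0"
  by (simp add: mat_trace_def ad_mat_def sum_lessThan_conv_sum_list s_eta_simps)

lemma pow_mat_2: "A \<in> carrier_mat n n \<Longrightarrow> A ^\<^sub>m 2 = A * A"
  by (simp add: numeral_2_eq_2)

lemma mat_trace_ad_mat_s_eta_square:
  "mat_trace (ad_mat 7 (s_eta \<eta>) w ^\<^sub>m 2) = (3 - 4 * \<eta>\<^sup>2) * (w $ 0)\<^sup>2"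
  unfolding pow_mat_2[OF ad_mat_carrier]
  by (simp add: mat_trace_def ad_mat_def scalar_prod_def sum_lessThan_conv_sum_list s_eta_simps del: set_upt)
    (simp add: power2_eq_square algebra_simps)

lemma s_eta_not_isomorphic:
  assumes "0 \<le> \<eta>" "0 \<le> \<eta>'" "\<eta> \<noteq> \<eta>'"
  shows "\<not> lie_isomorphic 7 (s_eta \<eta>) (s_eta \<eta>')"
proof
  assume "lie_isomorphic 7 (s_eta \<eta>) (s_eta \<eta>')"
  then obtain A where A: "A \<in> carrier_mat 7 7" "det A \<noteq> 0"
    and hom: "\<forall>x \<in> carrier_vec 7. \<forall>y \<in> carrier_vec 7.
        A *\<^sub>v lie_br 7 (s_eta \<eta>) x y = lie_br 7 (s_eta \<eta>') (A *\<^sub>v x) (A *\<^sub>v y)"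
    unfolding lie_isomorphic_def by blast
  let ?w = "A *\<^sub>v unit_vec 7 0"
  have sim: "similar_mat (ad_mat 7 (s_eta \<eta>') ?w) (ad_mat 7 (s_eta \<eta>) (unit_vec 7 0))"
    using lie_isomorphism_ad_mat_similar[OF A _ hom] by simp
  have "?w $ 0 = 1"
    using similar_mat_trace_pow[OF sim, of 1] by (simp add: mat_trace_ad_mat_s_eta)
  then have "3 - 4 * \<eta>'\<^sup>2 = 3 - 4 * \<eta>\<^sup>2"
    using similar_mat_trace_pow[OF sim, of 2] by (simp add: mat_trace_ad_mat_s_eta_square)
  then show False
    using assms by (simp add: power2_eq_iff_nonneg)
qed


lemma torsion_form_s_eta: "torsion_form (s_eta \<eta>) phi0 = tau0"
  unfolding torsion_form_def
proof (rule the_equality)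
  show "is_form 7 2 tau0 \<and> wedge tau0 (hodge 7 phi0) = zero_form \<and>
      CE_d 7 (s_eta \<eta>) (hodge 7 phi0) = wedge tau0 phi0"
    using is_form_tau0 wedge_tau0_hodge_phi0 CE_d_hodge_phi0 by simp
next
  fix \<tau>
  assume "is_form 7 2 \<tau> \<and> wedge \<tau> (hodge 7 phi0) = zero_form \<and>
      CE_d 7 (s_eta \<eta>) (hodge 7 phi0) = wedge \<tau> phi0"
  then show "\<tau> = tau0"
    using wedge_phi0_inj[OF _ is_form_tau0] CE_d_hodge_phi0 by simp
qed

theorem mainTheorem6:
  shows "(\<forall>\<eta>::real.
            exact_form 7 (s_eta \<eta>) 3 phi0
          \<and> closed_G2 (s_eta \<eta>) phi0
          \<and> ERP (s_eta \<eta>) phi0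
          \<and> torsion_form (s_eta \<eta>) phi0 = tau0
          \<and> solvable_lie 7 (s_eta \<eta>)
          \<and> (completely_solvable 7 (s_eta \<eta>) \<longleftrightarrow> \<eta> = 0))
       \<and> (\<forall>\<eta> \<eta>' :: real. 0 \<le> \<eta> \<longrightarrow> 0 \<le> \<eta>' \<longrightarrow> \<eta> \<noteq> \<eta>' \<longrightarrow>
            \<not> lie_isomorphic 7 (s_eta \<eta>) (s_eta \<eta>'))"
proof (intro conjI allI impI)
  fix \<eta> :: real
  show "exact_form 7 (s_eta \<eta>) 3 phi0"
    unfolding exact_form_def using is_form_phi0_primitive CE_d_phi0_primitive by fastforce
  show closed: "closed_G2 (s_eta \<eta>) phi0"
    unfolding closed_G2_def is_G2_in_basis_def by (simp add: CE_d_phi0)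
  show "ERP (s_eta \<eta>) phi0"
    unfolding ERP_def Let_def torsion_form_s_eta form_norm2_tau0 using closed by (simp add: CE_d_tau0)
  show "torsion_form (s_eta \<eta>) phi0 = tau0"
    by (rule torsion_form_s_eta)
  show "solvable_lie 7 (s_eta \<eta>)"
    by (rule solvable_s_eta)
  show "completely_solvable 7 (s_eta \<eta>) \<longleftrightarrow> \<eta> = 0"
    by (rule completely_solvable_s_eta_iff)
qed (rule s_eta_not_isomorphic)

end
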